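(* Let $m, r$ be positive integers with $r$ even and $m \geq 4$. Then the complete graph $K_4$ is (isomorphic to) a subgraph of $G(\mathbb{Z}^m, \sqrt{r})$.
   Context: For $X \subseteq \mathbb{R}^m$ and $d>0$, $G(X,d)$ denotes the Euclidean distance graph with vertex set $X$ in which two vertices are adjacent if and only if their Euclidean distance is exactly $d$. *)

theory Defs
  imports "HOL-Analysis.Analysis"
begin

text \<open>The integer lattice Z^m inside R^m, where R^m is modelled as real^'n with m = CARD('n).\<close>
definition int_lattice :: "(real^'n) set" where
  "int_lattice = {x. \<forall>i. x $ i \<in> \<int>}"

definition dist_graph_adj :: "(real^'n) set \<Rightarrow> real \<Rightarrow> real^'n \<Rightarrow> real^'n \<Rightarrow> bool" where
  "dist_graph_adj X d x y \<longleftrightarrow> x \<in> X \<and> y \<in> X \<and> dist x y = d"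

definition contains_complete_subgraph :: "nat \<Rightarrow> (real^'n) set \<Rightarrow> real \<Rightarrow> bool" where
  "contains_complete_subgraph k X d \<longleftrightarrow>
     (\<exists>f :: nat \<Rightarrow> real^'n. inj_on f {..<k} \<and> (\<forall>i<k. f i \<in> X) \<and>
        (\<forall>i<k. \<forall>j<k. i \<noteq> j \<longrightarrow> dist_graph_adj X d (f i) (f j)))"

end

theory Submission
  imports Defs "HOL-Computational_Algebra.Primes"
begin

text \<open>Write \<open>r = 2 s\<close> and, by Lagrange's four-square theorem, \<open>s = a\<^sup>2 + b\<^sup>2 + c\<^sup>2 + d\<^sup>2\<close>,
  the squared norm of the quaternion \<open>q = a + b i + c j + d k\<close>. The points \<open>0, 1 + i, 1 + j, 1 + k\<close>
  of \<open>\<int>\<^sup>4\<close> are pairwise at distance \<open>\<surd>2\<close>; right multiplication by \<open>q\<close> maps \<open>\<int>\<^sup>4\<close> into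
  itself and scales distances by \<open>\<surd>s\<close>, so it yields four lattice points at pairwise distance
  \<open>\<surd>r\<close>, which embed in \<open>\<int>\<^sup>m\<close> via any four coordinates.

  Lagrange's theorem is proved by Euler's descent: every prime \<open>p\<close> divides some \<open>x\<^sup>2 + y\<^sup>2 + 1\<close>,
  and if \<open>m p\<close> with \<open>1 < m < p\<close> is a sum of four squares, reducing the four numbers to absolutely
  least residues modulo \<open>m\<close> and applying Euler's four-square identity exhibits a smaller such multiple.\<close>

definition sum_of_four_squares :: "int \<Rightarrow> bool" where
  "sum_of_four_squares n \<longleftrightarrow> (\<exists>a b c d. n = a^2 + b^2 + c^2 + d^2)"

lemma euler_four_square_identity:
  fixes a1 a2 a3 a4 b1 b2 b3 b4 :: "'a::comm_ring_1"
  shows "(a1^2 + a2^2 + a3^2 + a4^2) * (b1^2 + b2^2 + b3^2 + b4^2) =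
    (a1*b1 + a2*b2 + a3*b3 + a4*b4)^2 + (a1*b2 - a2*b1 + a3*b4 - a4*b3)^2 +
    (a1*b3 - a2*b4 - a3*b1 + a4*b2)^2 + (a1*b4 + a2*b3 - a3*b2 - a4*b1)^2"
  by (simp add: power2_eq_square algebra_simps)

lemma sum_of_four_squares_mult:
  assumes "sum_of_four_squares x" and "sum_of_four_squares y"
  shows "sum_of_four_squares (x * y)"
  using assms euler_four_square_identity unfolding sum_of_four_squares_def by metis

lemma balanced_residue:
  fixes x m :: int
  assumes "0 < m"
  obtains y k where "x = y + m * k" and "4 * y^2 \<le> m^2"
proof
  define c where "c = m div 2"
  define z where "z = (x + c) mod m"
  show "x = (z - c) + m * ((x + c) div m)"
    unfolding z_def by (simp add: algebra_simps)
  have "0 \<le> z" "z < m" "m - 1 \<le> 2 * c" "2 * c \<le> m"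
    using assms unfolding c_def z_def by simp_all
  then have "\<bar>2 * (z - c)\<bar> \<le> \<bar>m\<bar>"
    using assms by arith
  then have "(2 * (z - c))^2 \<le> m^2"
    by (simp only: abs_le_square_iff)
  then show "4 * (z - c)^2 \<le> m^2"
    by (simp only: power_mult_distrib) simp
qed

lemma sum_of_four_squares_cancel:
  fixes m :: int
  assumes "m \<noteq> 0"
    and x: "x1^2 + x2^2 + x3^2 + x4^2 = m * n"
    and y: "y1^2 + y2^2 + y3^2 + y4^2 = m * r"
    and x1: "x1 = y1 + m * k1" and x2: "x2 = y2 + m * k2"
    and x3: "x3 = y3 + m * k3" and x4: "x4 = y4 + m * k4"
  shows "sum_of_four_squares (n * r)"
proof -
  \<comment> \<open>the four terms of Euler's identity for \<open>x\<close> and \<open>y\<close>, divided by \<open>m\<close>\<close>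
  define w1 where "w1 = r + k1 * y1 + k2 * y2 + k3 * y3 + k4 * y4"
  define w2 where "w2 = k1 * y2 - k2 * y1 + k3 * y4 - k4 * y3"
  define w3 where "w3 = k1 * y3 - k2 * y4 - k3 * y1 + k4 * y2"
  define w4 where "w4 = k1 * y4 + k2 * y3 - k3 * y2 - k4 * y1"
  have "x1 * y1 + x2 * y2 + x3 * y3 + x4 * y4 = m * w1"
    using y unfolding x1 x2 x3 x4 w1_def by (simp add: power2_eq_square algebra_simps)
  moreover have "x1 * y2 - x2 * y1 + x3 * y4 - x4 * y3 = m * w2"
    unfolding x1 x2 x3 x4 w2_def by (simp add: algebra_simps)
  moreover have "x1 * y3 - x2 * y4 - x3 * y1 + x4 * y2 = m * w3"
    unfolding x1 x2 x3 x4 w3_def by (simp add: algebra_simps)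
  moreover have "x1 * y4 + x2 * y3 - x3 * y2 - x4 * y1 = m * w4"
    unfolding x1 x2 x3 x4 w4_def by (simp add: algebra_simps)
  ultimately have "(m * n) * (m * r) = (m * w1)^2 + (m * w2)^2 + (m * w3)^2 + (m * w4)^2"
    using euler_four_square_identity[of x1 x2 x3 x4 y1 y2 y3 y4] x y by simp
  then have "(m * m) * (n * r) = (m * m) * (w1^2 + w2^2 + w3^2 + w4^2)"
    by (simp add: power2_eq_square algebra_simps)
  then show ?thesis
    using \<open>m \<noteq> 0\<close> unfolding sum_of_four_squares_def by auto
qed

lemma dvd_diff_if_dvd_double_residues:
  fixes m :: int
  assumes "m \<noteq> 0"
    and x: "x1^2 + x2^2 + x3^2 + x4^2 = m * n"
    and y: "y1^2 + y2^2 + y3^2 + y4^2 = m * r"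
    and x1: "x1 = y1 + m * k1" and x2: "x2 = y2 + m * k2"
    and x3: "x3 = y3 + m * k3" and x4: "x4 = y4 + m * k4"
    and dvd: "m dvd 2 * y1" "m dvd 2 * y2" "m dvd 2 * y3" "m dvd 2 * y4"
  shows "m dvd n - r"
proof -
  obtain e1 e2 e3 e4 where e: "2 * y1 = m * e1" "2 * y2 = m * e2" "2 * y3 = m * e3" "2 * y4 = m * e4"
    using dvd by (elim dvdE) blast
  have "m * n = (y1^2 + y2^2 + y3^2 + y4^2)
      + m * (2 * y1 * k1 + 2 * y2 * k2 + 2 * y3 * k3 + 2 * y4 * k4)
      + m * m * (k1^2 + k2^2 + k3^2 + k4^2)"
    unfolding x[symmetric] x1 x2 x3 x4 by (simp add: power2_eq_square algebra_simps)
  also have "\<dots> = m * (r + m * (e1 * k1 + e2 * k2 + e3 * k3 + e4 * k4 + k1^2 + k2^2 + k3^2 + k4^2))"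
    unfolding y mult.assoc[symmetric] e by (simp add: algebra_simps)
  finally show ?thesis
    using \<open>m \<noteq> 0\<close> by simp
qed

lemma dvd_if_extreme_residue_sum:
  fixes m :: int
  assumes "0 < m"
    and x: "x1^2 + x2^2 + x3^2 + x4^2 = m * n"
    and y: "y1^2 + y2^2 + y3^2 + y4^2 = m * r"
    and x1: "x1 = y1 + m * k1" and x2: "x2 = y2 + m * k2"
    and x3: "x3 = y3 + m * k3" and x4: "x4 = y4 + m * k4"
    and y1: "4 * y1^2 \<le> m^2" and y2: "4 * y2^2 \<le> m^2"
    and y3: "4 * y3^2 \<le> m^2" and y4: "4 * y4^2 \<le> m^2"
    and r: "r = 0 \<or> r = m"
  shows "m dvd n"
proof -
  have half: "m dvd 2 * y" if "4 * y^2 = m * r" for y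
  proof -
    from r that have "(2 * y)^2 = 0^2 \<or> (2 * y)^2 = m^2"
      by (auto simp: power2_eq_square)
    then have "2 * y = 0 \<or> 2 * y = m \<or> 2 * y = - m"
      unfolding power2_eq_iff by auto
    then show ?thesis
      by auto
  qed
  have "0 \<le> y1^2" "0 \<le> y2^2" "0 \<le> y3^2" "0 \<le> y4^2"
    by simp_all
  with r have "4 * y1^2 = m * r" "4 * y2^2 = m * r" "4 * y3^2 = m * r" "4 * y4^2 = m * r"
    using y y1 y2 y3 y4 power2_eq_square[of m] by (elim disjE; hypsubst; linarith)+
  then have "m dvd n - r"
    using dvd_diff_if_dvd_double_residues[OF _ x y x1 x2 x3 x4] half \<open>0 < m\<close> by simp
  with r show "m dvd n"
    using dvd_add[of m "n - r" r] by auto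
qed

lemma sum_of_four_squares_descent_step:
  fixes m n :: int
  assumes "0 < m" and "\<not> m dvd n" and "sum_of_four_squares (m * n)"
  obtains r where "0 < r" and "r < m" and "sum_of_four_squares (r * n)"
proof -
  obtain x1 x2 x3 x4 where x: "x1^2 + x2^2 + x3^2 + x4^2 = m * n"
    using assms(3) unfolding sum_of_four_squares_def by metis
  obtain y1 k1 where x1: "x1 = y1 + m * k1" and y1: "4 * y1^2 \<le> m^2"
    using balanced_residue[OF \<open>0 < m\<close>] .
  obtain y2 k2 where x2: "x2 = y2 + m * k2" and y2: "4 * y2^2 \<le> m^2"
    using balanced_residue[OF \<open>0 < m\<close>] .
  obtain y3 k3 where x3: "x3 = y3 + m * k3" and y3: "4 * y3^2 \<le> m^2"
    using balanced_residue[OF \<open>0 < m\<close>] .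
  obtain y4 k4 where x4: "x4 = y4 + m * k4" and y4: "4 * y4^2 \<le> m^2"
    using balanced_residue[OF \<open>0 < m\<close>] .
  have "y1^2 + y2^2 + y3^2 + y4^2 = m * (n - 2 * (y1 * k1 + y2 * k2 + y3 * k3 + y4 * k4)
      - m * (k1^2 + k2^2 + k3^2 + k4^2))"
    using x unfolding x1 x2 x3 x4 by (simp add: power2_eq_square algebra_simps)
  then obtain r where y: "y1^2 + y2^2 + y3^2 + y4^2 = m * r"
    by blast
  have "m * r \<le> m * m"
    using y y1 y2 y3 y4 by (simp add: power2_eq_square)
  moreover have "0 \<le> m * r"
    unfolding y[symmetric] by simp
  ultimately have "r \<le> m" and "0 \<le> r"
    using \<open>0 < m\<close> by (simp_all add: zero_le_mult_iff)
  moreover have "\<not> (r = 0 \<or> r = m)"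
    using dvd_if_extreme_residue_sum[OF \<open>0 < m\<close> x y x1 x2 x3 x4 y1 y2 y3 y4] \<open>\<not> m dvd n\<close>
    by blast
  ultimately have "0 < r" and "r < m"
    by auto
  moreover have "sum_of_four_squares (r * n)"
    using sum_of_four_squares_cancel[OF _ x y x1 x2 x3 x4] \<open>0 < m\<close> by (simp add: mult.commute)
  ultimately show ?thesis
    by (rule that)
qed

lemma prime_sum_of_four_squares_descent:
  fixes p m :: int
  assumes "prime p" and "0 < m" and "m < p" and "sum_of_four_squares (m * p)"
  shows "sum_of_four_squares p"
  using assms(2-4)
proof (induction "nat m" arbitrary: m rule: less_induct)
  case less
  show ?case
  proof (cases "m = 1")
    case True
    with less.prems show ?thesis
      by simp
  next
    case False
    have "\<not> m dvd p"
    proof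
      assume "m dvd p"
      with \<open>prime p\<close> less.prems have "m = 1 \<or> m = p"
        unfolding prime_int_iff by (meson less_imp_le)
      with False less.prems show False
        by simp
    qed
    with less.prems obtain r where "0 < r" "r < m" "sum_of_four_squares (r * p)"
      using sum_of_four_squares_descent_step by blast
    with less.hyps[of r] less.prems show ?thesis
      by simp
  qed
qed

lemma inj_on_power2_mod_prime:
  fixes p :: int
  assumes "prime p"
  shows "inj_on (\<lambda>x. x^2 mod p) {0..(p - 1) div 2}"
proof (rule inj_onI)
  fix x x'
  assume x: "x \<in> {0..(p - 1) div 2}" and x': "x' \<in> {0..(p - 1) div 2}"
    and "x^2 mod p = x'^2 mod p"
  then have "p dvd (x - x') * (x + x')"
    by (simp add: mod_eq_dvd_iff power2_eq_square algebra_simps)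
  then have "p dvd x - x' \<or> p dvd x + x'"
    using prime_dvd_multD[OF assms] by blast
  moreover have "\<bar>x - x'\<bar> < \<bar>p\<bar>" and "\<bar>x + x'\<bar> < \<bar>p\<bar>"
    using x x' prime_ge_2_int[OF assms] by auto
  ultimately have "x - x' = 0 \<or> x + x' = 0"
    using dvd_imp_le_int[of "x - x'" p] dvd_imp_le_int[of "x + x'" p] by linarith
  with x x' show "x = x'"
    by auto
qed

lemma prime_dvd_sum_two_squares_plus_one:
  fixes p :: int
  assumes "prime p"
  obtains x y where "p dvd x^2 + y^2 + 1"
proof (cases "p = 2")
  case True
  then have "p dvd 1^2 + 0^2 + 1"
    by simp
  then show ?thesis
    by (rule that)
next
  case False
  then have "odd p"
    using prime_odd_int[OF assms] prime_ge_2_int[OF assms] by simp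
  define h where "h = (p - 1) div 2"
  define A where "A = (\<lambda>x. x^2 mod p) ` {0..h}"
  define B where "B = (\<lambda>y. (- 1 - y^2) mod p) ` {0..h}"
  have "inj_on (\<lambda>y. (- 1 - y^2) mod p) {0..h}"
  proof (rule inj_onI)
    fix y y'
    assume y: "y \<in> {0..h}" "y' \<in> {0..h}" and "(- 1 - y^2) mod p = (- 1 - y'^2) mod p"
    then have "p dvd y'^2 - y^2"
      by (simp add: mod_eq_dvd_iff algebra_simps)
    then have "y'^2 mod p = y^2 mod p"
      by (simp add: mod_eq_dvd_iff)
    with y show "y = y'"
      using inj_onD[OF inj_on_power2_mod_prime[OF assms], of y' y] unfolding h_def by simp
  qed
  then have "card B = nat (h + 1)"
    unfolding B_def by (simp add: card_image)
  moreover have "card A = nat (h + 1)"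
    using inj_on_power2_mod_prime[OF assms] unfolding A_def h_def by (simp add: card_image)
  moreover have "card (A \<union> B) \<le> card {0..<p}"
    using prime_gt_0_int[OF assms] unfolding A_def B_def by (intro card_mono) auto
  moreover have "2 * (h + 1) = p + 1"
    using \<open>odd p\<close> unfolding h_def by (elim oddE) simp
  ultimately have "card (A \<union> B) < card A + card B"
    using prime_gt_0_int[OF assms] by simp
  moreover have "finite A" and "finite B"
    unfolding A_def B_def by simp_all
  ultimately have "A \<inter> B \<noteq> {}"
    using card_Un_disjoint by fastforce
  then obtain x y where "x^2 mod p = (- 1 - y^2) mod p"
    unfolding A_def B_def by auto
  then have "p dvd x^2 + y^2 + 1"
    by (simp add: mod_eq_dvd_iff algebra_simps)
  then show ?thesis
    by (rule that)
qed

lemma prime_sum_of_four_squares: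
  fixes p :: int
  assumes "prime p"
  shows "sum_of_four_squares p"
proof -
  have "2 \<le> p" and "0 < p"
    using prime_ge_2_int[OF assms] by simp_all
  obtain x y where "p dvd x^2 + y^2 + 1"
    using prime_dvd_sum_two_squares_plus_one[OF assms] .
  obtain x0 k where x: "x = x0 + p * k" and x0: "4 * x0^2 \<le> p^2"
    using balanced_residue[OF \<open>0 < p\<close>] .
  obtain y0 l where y: "y = y0 + p * l" and y0: "4 * y0^2 \<le> p^2"
    using balanced_residue[OF \<open>0 < p\<close>] .
  have "x^2 + y^2 + 1 = (x0^2 + y0^2 + 1) + p * (2 * x0 * k + p * k^2 + 2 * y0 * l + p * l^2)"
    unfolding x y by (simp add: power2_eq_square algebra_simps)
  with \<open>p dvd x^2 + y^2 + 1\<close> have "p dvd x0^2 + y0^2 + 1"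
    by (metis dvd_add_left_iff dvd_triv_left)
  then obtain m where m: "x0^2 + y0^2 + 1 = m * p"
    by (metis dvd_def mult.commute)
  have "0 < m * p"
    unfolding m[symmetric] by (simp add: add_nonneg_pos)
  then have "0 < m"
    using \<open>0 < p\<close> by (simp add: zero_less_mult_iff)
  have "4 * (m * p) < 4 * (p * p)"
    using m x0 y0 \<open>2 \<le> p\<close> mult_mono[of 2 p 2 p] unfolding power2_eq_square by linarith
  then have "m < p"
    using \<open>0 < p\<close> by simp
  moreover have "m * p = x0^2 + y0^2 + 1^2 + 0^2"
    using m by simp
  then have "sum_of_four_squares (m * p)"
    unfolding sum_of_four_squares_def by blast
  ultimately show ?thesis
    using prime_sum_of_four_squares_descent[OF assms \<open>0 < m\<close>] by blast
qed

theorem lagrange_four_squares: "sum_of_four_squares (int n)"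
proof (induction n rule: prime_divisors_induct)
  case zero
  have "int 0 = 0^2 + 0^2 + 0^2 + 0^2"
    by simp
  then show ?case
    unfolding sum_of_four_squares_def by blast
next
  case (unit n)
  then have "int n = 1^2 + 0^2 + 0^2 + 0^2"
    by simp
  then show ?case
    unfolding sum_of_four_squares_def by blast
next
  case (factor p n)
  then have "sum_of_four_squares (int p)"
    by (simp add: prime_sum_of_four_squares)
  with factor.IH show ?case
    using sum_of_four_squares_mult by simp
qed

definition embed_coords :: "nat set \<Rightarrow> (nat \<Rightarrow> 'n) \<Rightarrow> (nat \<Rightarrow> int) \<Rightarrow> real^'n" where
  "embed_coords I h v = (\<chi> j. if j \<in> h ` I then of_int (v (the_inv_into I h j)) else 0)"

lemma embed_coords_in_int_lattice: "embed_coords I h v \<in> int_lattice"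
  unfolding int_lattice_def embed_coords_def by auto

lemma dist_embed_coords:
  assumes "finite I" and "inj_on h I"
  shows "dist (embed_coords I h v) (embed_coords I h w) = sqrt (of_int (\<Sum>i\<in>I. (v i - w i)^2))"
proof -
  have "dist (embed_coords I h v) (embed_coords I h w)
      = sqrt (\<Sum>j\<in>UNIV. (embed_coords I h v $ j - embed_coords I h w $ j)^2)"
    unfolding dist_vec_def L2_set_def dist_real_def by simp
  also have "(\<Sum>j\<in>UNIV. (embed_coords I h v $ j - embed_coords I h w $ j)^2)
      = (\<Sum>j\<in>h ` I. (embed_coords I h v $ j - embed_coords I h w $ j)^2)"
    by (rule sum.mono_neutral_right) (auto simp: embed_coords_def)
  also have "\<dots> = (\<Sum>i\<in>I. (embed_coords I h v $ h i - embed_coords I h w $ h i)^2)"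
    using sum.reindex[OF \<open>inj_on h I\<close>] by simp
  also have "\<dots> = of_int (\<Sum>i\<in>I. (v i - w i)^2)"
    by (simp add: embed_coords_def the_inv_into_f_f[OF \<open>inj_on h I\<close>])
  finally show ?thesis .
qed

lemma contains_complete_subgraph_int_lattice:
  fixes p :: "nat \<Rightarrow> nat \<Rightarrow> int"
  assumes "n \<le> CARD('n::finite)" and "0 < s"
    and "\<And>i j. i < k \<Longrightarrow> j < k \<Longrightarrow> i \<noteq> j \<Longrightarrow> (\<Sum>l<n. (p i l - p j l)^2) = s"
  shows "contains_complete_subgraph k (int_lattice :: (real^'n) set) (sqrt (of_int s))"
proof -
  obtain h :: "nat \<Rightarrow> 'n" where h: "inj_on h {..<n}"
    using card_le_inj[of "{..<n}" "UNIV :: 'n set"] assms(1) by auto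
  define f where "f i = embed_coords {..<n} h (p i)" for i
  have dist_f: "dist (f i) (f j) = sqrt (of_int s)" if "i < k" "j < k" "i \<noteq> j" for i j
    unfolding f_def dist_embed_coords[OF finite_lessThan h] assms(3)[OF that] ..
  have "inj_on f {..<k}"
  proof (rule inj_onI)
    fix i j
    assume "i \<in> {..<k}" "j \<in> {..<k}" "f i = f j"
    then show "i = j"
      using dist_f \<open>0 < s\<close> by fastforce
  qed
  moreover have "f i \<in> int_lattice" for i
    unfolding f_def by (rule embed_coords_in_int_lattice)
  ultimately show ?thesis
    unfolding contains_complete_subgraph_def dist_graph_adj_def using dist_f by blast
qed

text \<open>Row \<open>i\<close> lists the coordinates of \<open>q u\<^sub>i\<close>, where \<open>q = a + b i + c j + d k\<close> and
  \<open>u = 0, 1 + i, 1 + j, 1 + k\<close>.\<close>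

definition quaternion_tetrahedron :: "int \<Rightarrow> int \<Rightarrow> int \<Rightarrow> int \<Rightarrow> nat \<Rightarrow> nat \<Rightarrow> int" where
  "quaternion_tetrahedron a b c d i l =
    [[0, 0, 0, 0], [a - b, a + b, c + d, d - c], [a - c, b - d, a + c, b + d], [a - d, b + c, c - b, a + d]] ! i ! l"

lemma quaternion_tetrahedron_edge:
  assumes "i < 4" and "j < 4" and "i \<noteq> j"
  shows "(\<Sum>l<4. (quaternion_tetrahedron a b c d i l - quaternion_tetrahedron a b c d j l)^2)
    = 2 * (a^2 + b^2 + c^2 + d^2)"
proof -
  have "i \<in> {0, 1, 2, 3}" and "j \<in> {0, 1, 2, 3}"
    using assms(1,2) by auto
  with assms(3) show ?thesis
    unfolding quaternion_tetrahedron_def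
    by (auto simp: eval_nat_numeral power2_eq_square algebra_simps)
qed

theorem lemma3:
  fixes r :: nat
  assumes "CARD('n::finite) \<ge> 4"
    and "r > 0" and "even r"
  shows "contains_complete_subgraph 4 (int_lattice :: (real^'n) set) (sqrt (real r))"
proof -
  obtain s where "r = 2 * s"
    using \<open>even r\<close> by (elim evenE)
  obtain a b c d where s: "int s = a^2 + b^2 + c^2 + d^2"
    using lagrange_four_squares[of s] unfolding sum_of_four_squares_def by blast
  have edge: "(\<Sum>l<4. (quaternion_tetrahedron a b c d i l - quaternion_tetrahedron a b c d j l)^2) = int r"
    if "i < 4" and "j < 4" and "i \<noteq> j" for i j
    using quaternion_tetrahedron_edge[OF that] s \<open>r = 2 * s\<close> by simp
  have "contains_complete_subgraph 4 (int_lattice :: (real^'n) set) (sqrt (of_int (int r)))"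
    using \<open>r > 0\<close> edge by (intro contains_complete_subgraph_int_lattice[OF assms(1)]) simp_all
  then show ?thesis
    by simp
qed

end
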